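(* Let $\Gamma$ be a finite group, $F:\Gamma\to\Gamma$ a group automorphism, and $\mathbf{E}=\bigoplus_{w\in\Gamma}\mathbf{E}_w$ a finite-dimensional associative $\bar{\mathbb{Q}}_l$-algebra with $1$ with $\dim\mathbf{E}_w=1$, $\mathbf{E}_w\mathbf{E}_y=\mathbf{E}_{wy}$; choose basis elements $b_w\in\mathbf{E}_w$. Let $\iota:\mathbf{E}\to\mathbf{E}$ be an algebra automorphism with $\iota(\mathbf{E}_w)=\mathbf{E}_{F(w)}$ for all $w$. Let $V$ be a simple $\mathbf{E}$-module admitting a linear isomorphism $\iota_V:V\to V$ with $\iota_V(ev)=\iota(e)\iota_V(v)$ for all $e,v$. If $x\in\Gamma$ is not effective, then $\mathrm{tr}(\iota_Vb_x,V)=0$.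
   Context: For $x\in\Gamma$ let $\Gamma_x=\{y\in\Gamma: F^{-1}(y)xy^{-1}=x\}$, and define $\gamma_x:\Gamma_x\to\bar{\mathbb{Q}}_l^*$ by $\iota^{-1}(b_y)b_x=\gamma_x(y)b_xb_y$. The element $x$ is called effective if $\gamma_x(y)=1$ for all $y\in\Gamma_x$. *)

theory Defs
  imports "HOL-Algebra.Group" "HOL-Computational_Algebra.Polynomial"
begin

text \<open>Algebraically closed field (the role of the algebraic closure of Q_l).\<close>
definition alg_closed :: "'k::field itself \<Rightarrow> bool" where
  "alg_closed _ \<longleftrightarrow> (\<forall>p::'k poly. degree p > 0 \<longrightarrow> (\<exists>z. poly p z = 0))"

definition lin_trace :: "('k::field \<Rightarrow> 'v::ab_group_add \<Rightarrow> 'v) \<Rightarrow> ('v \<Rightarrow> 'v) \<Rightarrow> 'k" where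
  "lin_trace s f =
     (let B = (SOME B. \<not> module.dependent s B \<and> module.span s B = UNIV)
      in \<Sum>v\<in>B. module.representation s B (f v) v)"

definition is_algebra :: "('k::field \<Rightarrow> 'e::ring_1 \<Rightarrow> 'e) \<Rightarrow> bool" where
  "is_algebra s \<longleftrightarrow> vector_space s \<and>
     (\<forall>c a d. s c (a * d) = s c a * d \<and> s c (a * d) = a * s c d)"

definition direct_sum_decomp :: "('a, 'm) monoid_scheme \<Rightarrow> ('k::field \<Rightarrow> 'e::ring_1 \<Rightarrow> 'e) \<Rightarrow> ('a \<Rightarrow> 'e set) \<Rightarrow> bool" where
  "direct_sum_decomp G s Esub \<longleftrightarrow>
     (\<forall>w\<in>carrier G. module.subspace s (Esub w)) \<and>
     (\<forall>e. \<exists>!c. (\<forall>w\<in>carrier G. c w \<in> Esub w) \<and> (\<forall>w. w \<notin> carrier G \<longrightarrow> c w = 0) \<and>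
             e = (\<Sum>w\<in>carrier G. c w))"

definition is_module :: "('k::field \<Rightarrow> 'e::ring_1 \<Rightarrow> 'e) \<Rightarrow> ('k \<Rightarrow> 'v::ab_group_add \<Rightarrow> 'v) \<Rightarrow> ('e \<Rightarrow> 'v \<Rightarrow> 'v) \<Rightarrow> bool" where
  "is_module sE sV act \<longleftrightarrow> vector_space sV \<and>
     (\<forall>a d v. act (a * d) v = act a (act d v)) \<and> (\<forall>v. act 1 v = v) \<and>
     (\<forall>a d v. act (a + d) v = act a v + act d v) \<and>
     (\<forall>a u v. act a (u + v) = act a u + act a v) \<and>
     (\<forall>c a v. act (sE c a) v = sV c (act a v)) \<and>
     (\<forall>c a v. act a (sV c v) = sV c (act a v))"

definition simple_module :: "('k::field \<Rightarrow> 'v::ab_group_add \<Rightarrow> 'v) \<Rightarrow> ('e \<Rightarrow> 'v \<Rightarrow> 'v) \<Rightarrow> bool" where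
  "simple_module sV act \<longleftrightarrow> (\<exists>v::'v. v \<noteq> 0) \<and>
     (\<forall>W. module.subspace sV W \<and> (\<forall>a. \<forall>v\<in>W. act a v \<in> W) \<longrightarrow> W = {0} \<or> W = UNIV)"

definition Gamma_x :: "('a, 'm) monoid_scheme \<Rightarrow> ('a \<Rightarrow> 'a) \<Rightarrow> 'a \<Rightarrow> 'a set" where
  "Gamma_x G F x = {y \<in> carrier G. monoid.mult G (monoid.mult G (inv_into (carrier G) F y) x) (m_inv G y) = x}"

definition gamma_x :: "('k::field \<Rightarrow> 'e::ring_1 \<Rightarrow> 'e) \<Rightarrow> ('e \<Rightarrow> 'e) \<Rightarrow> ('a \<Rightarrow> 'e) \<Rightarrow> 'a \<Rightarrow> 'a \<Rightarrow> 'k" where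
  "gamma_x s \<iota> b x y = (THE c. inv_into UNIV \<iota> (b y) * b x = s c (b x * b y))"

definition effective :: "('a, 'm) monoid_scheme \<Rightarrow> ('a \<Rightarrow> 'a) \<Rightarrow> ('k::field \<Rightarrow> 'e::ring_1 \<Rightarrow> 'e) \<Rightarrow> ('e \<Rightarrow> 'e) \<Rightarrow> ('a \<Rightarrow> 'e) \<Rightarrow> 'a \<Rightarrow> bool" where
  "effective G F s \<iota> b x \<longleftrightarrow> (\<forall>y\<in>Gamma_x G F x. gamma_x s \<iota> b x y = 1)"

end

theory Submission
  imports Defs
begin

(* Pick y in Gamma_x with gamma_x(y) \<noteq> 1. Writing T = iota_V b_x, the relation
   iota^-1(b_y) b_x = gamma_x(y) b_x b_y gives b_y T = gamma_x(y) T b_y on V, and b_y is invertible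
   up to a nonzero scalar because b_y b_(y^-1) spans the unit component, which contains 1.
   Hence T is conjugate to gamma_x(y) T, so tr T = gamma_x(y) tr T and tr T = 0. The trace is
   defined because the simple module V is cyclic, hence finite-dimensional. *)

context vector_space begin

lemma subset_zero_imp_dim_eq_0:
  assumes "S \<subseteq> {0}"
  shows "dim S = 0"
proof -
  have "span S \<subseteq> span {}"
    using span_mono[OF assms] by simp
  then have "span S = span {}"
    using span_zero by auto
  then show ?thesis using dim_eq_card[of "{}" S] by (simp add: independent_empty)
qed

lemma dim_eq_1_imp_multiple:
  assumes "dim S = 1" "b \<in> S" "b \<noteq> 0" "a \<in> S"
  shows "\<exists>c. a = c *s b"
proof -
  obtain B where B: "B \<subseteq> S" "independent B" "S \<subseteq> span B" "card B = dim S"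
    using basis_exists by blast
  then obtain u where "B = {u}" using assms(1) card_1_singletonE by metis
  then have span_B: "span B = range (\<lambda>k. k *s u)" by (simp add: span_singleton)
  obtain k where k: "b = k *s u" using B(3) assms(2) unfolding span_B by blast
  obtain m where m: "a = m *s u" using B(3) assms(4) unfolding span_B by blast
  have "k \<noteq> 0" using k assms(3) by auto
  then have "a = (m / k) *s b" using k m by simp
  then show ?thesis by blast
qed

lemma lin_trace_in_basis:
  assumes "finite S" "span S = UNIV"
  obtains B where "independent B" "span B = UNIV" "finite B"
    "\<And>f. lin_trace scale f = (\<Sum>v\<in>B. representation B (f v) v)"
proof
  define B where "B = (SOME B. \<not> dependent B \<and> span B = UNIV)"
  obtain B0 where "independent B0" "UNIV \<subseteq> span B0" using basis_exists[of UNIV] by blast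
  then have "\<not> dependent B0 \<and> span B0 = UNIV" by auto
  then have B: "\<not> dependent B \<and> span B = UNIV" unfolding B_def by (rule someI)
  then show "independent B" "span B = UNIV" by auto
  have "B \<subseteq> span S" using assms(2) by simp
  then show "finite B" using independent_span_bound[OF assms(1)] B by blast
  show "lin_trace scale f = (\<Sum>v\<in>B. representation B (f v) v)" for f
    unfolding lin_trace_def Let_def B_def by simp
qed

lemma representation_linear_image:
  assumes B: "independent B" "span B = UNIV" "finite B"
    and f: "Vector_Spaces.linear scale scale f"
  shows "representation B (f w) v = (\<Sum>u\<in>B. representation B w u * representation B (f u) v)"
proof -
  interpret f: Vector_Spaces.linear scale scale f by (rule f)
  have "f w = f (\<Sum>u\<in>B. representation B w u *s u)"
    using sum_representation_eq[OF B(1) _ B(3) order_refl] B(2) by simp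
  also have "\<dots> = (\<Sum>u\<in>B. representation B w u *s f u)"
    by (simp add: f.sum f.scale)
  finally have "representation B (f w) v
      = representation B (\<Sum>u\<in>B. representation B w u *s f u) v"
    by simp
  also have "\<dots> = (\<Sum>u\<in>B. representation B (representation B w u *s f u) v)"
    using B(2) by (subst representation_sum[OF B(1)]) auto
  finally show ?thesis
    using representation_scale[OF B(1)] B(2) by simp
qed

lemma lin_trace_comp_commute:
  assumes "finite S" "span S = UNIV"
    and f: "Vector_Spaces.linear scale scale f" and g: "Vector_Spaces.linear scale scale g"
  shows "lin_trace scale (f \<circ> g) = lin_trace scale (g \<circ> f)"
proof -
  obtain B where B: "independent B" "span B = UNIV" "finite B"
    and tr: "\<And>f. lin_trace scale f = (\<Sum>v\<in>B. representation B (f v) v)"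
    using lin_trace_in_basis[OF assms(1,2)] by blast
  have "lin_trace scale (f \<circ> g)
      = (\<Sum>v\<in>B. \<Sum>u\<in>B. representation B (g v) u * representation B (f u) v)"
    unfolding tr o_def by (intro sum.cong refl) (rule representation_linear_image[OF B f])
  also have "\<dots> = (\<Sum>u\<in>B. \<Sum>v\<in>B. representation B (f u) v * representation B (g v) u)"
    by (subst sum.swap) (simp only: mult.commute)
  also have "\<dots> = lin_trace scale (g \<circ> f)"
    unfolding tr o_def by (intro sum.cong refl) (rule representation_linear_image[OF B g, symmetric])
  finally show ?thesis .
qed

lemma lin_trace_scale:
  assumes "finite S" "span S = UNIV"
  shows "lin_trace scale (\<lambda>v. c *s f v) = c * lin_trace scale f"
proof -
  obtain B where B: "independent B" "span B = UNIV"
    and tr: "\<And>f. lin_trace scale f = (\<Sum>v\<in>B. representation B (f v) v)"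
    using lin_trace_in_basis[OF assms] by blast
  show ?thesis
    unfolding tr using representation_scale[OF B(1)] B(2) by (simp add: sum_distrib_left)
qed

lemma lin_trace_eq_0_if_conjugate_scaled:
  assumes "finite S" "span S = UNIV"
    and T: "Vector_Spaces.linear scale scale T"
    and B: "Vector_Spaces.linear scale scale B"
    and C: "Vector_Spaces.linear scale scale C"
    and BC: "\<And>v. B (C v) = \<kappa> *s v" and CB: "\<And>v. C (B v) = \<kappa> *s v" and "\<kappa> \<noteq> 0"
    and BT: "\<And>v. B (T v) = g *s T (B v)" and "g \<noteq> 1"
  shows "lin_trace scale T = 0"
proof -
  interpret T: Vector_Spaces.linear scale scale T by (rule T)
  have "\<kappa> * lin_trace scale T = lin_trace scale ((T \<circ> C) \<circ> B)"
    using lin_trace_scale[OF assms(1,2)] by (simp add: o_def CB T.scale)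
  also have "\<dots> = lin_trace scale (B \<circ> (T \<circ> C))"
    using lin_trace_comp_commute[OF assms(1,2) Vector_Spaces.linear_compose[OF C T] B] .
  also have "\<dots> = g * (\<kappa> * lin_trace scale T)"
    using lin_trace_scale[OF assms(1,2)] by (simp add: o_def BT BC T.scale)
  finally have "(1 - g) * \<kappa> * lin_trace scale T = 0" by (simp add: algebra_simps)
  then show ?thesis using assms by simp
qed

end

lemma (in group) Gamma_x_mult_commute:
  assumes F: "bij_betw F (carrier G) (carrier G)"
    and x: "x \<in> carrier G" and y: "y \<in> Gamma_x G F x"
  shows "inv_into (carrier G) F y \<otimes> x = x \<otimes> y"
proof -
  have yc: "y \<in> carrier G" using y by (simp add: Gamma_x_def)
  then have "inv_into (carrier G) F y \<in> carrier G"
    using F by (auto simp: bij_betw_def inv_into_into)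
  moreover have "inv_into (carrier G) F y \<otimes> x \<otimes> inv y = x"
    using y by (simp add: Gamma_x_def)
  ultimately show ?thesis
    using x yc by (metis inv_solve_right m_closed)
qed

locale rank_one_graded_algebra = group G
  for G :: "('a, 'm) monoid_scheme" (structure) +
  fixes sE :: "'k::field \<Rightarrow> 'e::ring_1 \<Rightarrow> 'e"
    and Esub :: "'a \<Rightarrow> 'e set"
    and b :: "'a \<Rightarrow> 'e"
  assumes algebra: "is_algebra sE"
    and decomp: "direct_sum_decomp G sE Esub"
    and dim_component: "\<forall>w\<in>carrier G. vector_space.dim sE (Esub w) = 1"
    and component_mult: "\<forall>w\<in>carrier G. \<forall>y\<in>carrier G.
          {a * c | a c. a \<in> Esub w \<and> c \<in> Esub y} = Esub (w \<otimes> y)"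
    and basis_component: "\<forall>w\<in>carrier G. b w \<in> Esub w \<and> b w \<noteq> 0"
begin

sublocale E: vector_space sE
  using algebra unfolding is_algebra_def by blast

lemma scale_mult_left [simp]: "sE c a * d = sE c (a * d)"
  using algebra unfolding is_algebra_def by metis

lemma scale_mult_right [simp]: "a * sE c d = sE c (a * d)"
  using algebra unfolding is_algebra_def by metis

lemma component_subspace: "w \<in> carrier G \<Longrightarrow> E.subspace (Esub w)"
  using decomp unfolding direct_sum_decomp_def by blast

lemma basis_in_component: "w \<in> carrier G \<Longrightarrow> b w \<in> Esub w"
  and basis_nonzero: "w \<in> carrier G \<Longrightarrow> b w \<noteq> 0"
  using basis_component by auto

lemma component_multiple_basis:
  assumes "w \<in> carrier G" "a \<in> Esub w"
  shows "\<exists>c. a = sE c (b w)"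
  using E.dim_eq_1_imp_multiple[of "Esub w" "b w" a] assms dim_component basis_component by simp

lemma mult_in_component:
  assumes "w \<in> carrier G" "u \<in> carrier G" "a \<in> Esub w" "c \<in> Esub u"
  shows "a * c \<in> Esub (w \<otimes> u)"
proof -
  have "a * c \<in> {a * c | a c. a \<in> Esub w \<and> c \<in> Esub u}" using assms(3,4) by blast
  then show ?thesis using component_mult assms(1,2) by simp
qed

lemma basis_mult_nonzero:
  assumes w: "w \<in> carrier G" and u: "u \<in> carrier G"
  shows "b w * b u \<noteq> 0"
proof
  assume zero: "b w * b u = 0"
  have "Esub (w \<otimes> u) \<subseteq> {0}"
  proof
    fix z assume "z \<in> Esub (w \<otimes> u)"
    then obtain a c where z: "z = a * c" and "a \<in> Esub w" "c \<in> Esub u"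
      using component_mult w u by blast
    then obtain \<alpha> \<beta> where "a = sE \<alpha> (b w)" "c = sE \<beta> (b u)"
      using component_multiple_basis w u by metis
    then show "z \<in> {0}" using z zero by simp
  qed
  then have "E.dim (Esub (w \<otimes> u)) = 0" by (rule E.subset_zero_imp_dim_eq_0)
  then show False using dim_component w u by simp
qed

lemma component_multiple_basis_mult:
  assumes w: "w \<in> carrier G" and u: "u \<in> carrier G" and z: "z \<in> Esub (w \<otimes> u)"
  shows "\<exists>c. z = sE c (b w * b u)"
proof (rule E.dim_eq_1_imp_multiple[of "Esub (w \<otimes> u)"])
  show "E.dim (Esub (w \<otimes> u)) = 1" using dim_component w u by simp
  show "b w * b u \<in> Esub (w \<otimes> u)"
    using mult_in_component[OF w u basis_in_component[OF w] basis_in_component[OF u]] .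
qed (use basis_mult_nonzero[OF w u] z in auto)

lemma span_basis: "E.span (b ` carrier G) = UNIV"
proof -
  have "e \<in> E.span (b ` carrier G)" for e
  proof -
    obtain c where c: "\<forall>w\<in>carrier G. c w \<in> Esub w" "e = (\<Sum>w\<in>carrier G. c w)"
      using decomp[unfolded direct_sum_decomp_def, THEN conjunct2, rule_format, of e]
      by (auto dest: ex1_implies_ex)
    have "c w \<in> E.span (b ` carrier G)" if w: "w \<in> carrier G" for w
    proof -
      obtain \<alpha> where "c w = sE \<alpha> (b w)" using component_multiple_basis[OF w] c(1) w by blast
      then show ?thesis using w by (simp add: E.span_base E.span_scale)
    qed
    then show ?thesis using c(2) by (simp add: E.span_sum)
  qed
  then show ?thesis by auto
qed

text \<open>A multiple of the basis vector of the unit component is idempotent, hence fixes every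
  basis vector (a nonzero idempotent scalar is 1), hence is the unit of the algebra.\<close>
lemma one_in_unit_component: "1 \<in> Esub \<one>"
proof -
  obtain l where l: "b \<one> * b \<one> = sE l (b \<one>)"
    using component_multiple_basis[OF one_closed]
      mult_in_component[OF one_closed one_closed basis_in_component basis_in_component]
    by auto
  have "l \<noteq> 0" using l basis_mult_nonzero by fastforce
  define e where "e = sE (1 / l) (b \<one>)"
  have idem: "e * e = e" unfolding e_def using l \<open>l \<noteq> 0\<close> by simp
  have fixes_basis: "e * b w = b w" if w: "w \<in> carrier G" for w
  proof -
    have "e * b w \<in> Esub w"
      unfolding e_def using mult_in_component[of \<one> w] basis_in_component w
      by (simp add: E.subspace_scale component_subspace)
    then obtain \<mu> where \<mu>: "e * b w = sE \<mu> (b w)" using component_multiple_basis[OF w] by blast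
    have "\<mu> \<noteq> 0"
      using \<mu> basis_mult_nonzero[of \<one> w] w \<open>l \<noteq> 0\<close> by (auto simp: e_def)
    have "sE (\<mu> * \<mu>) (b w) = sE \<mu> (b w)"
      using \<mu> idem by (metis E.scale_scale mult.assoc scale_mult_right)
    then have "\<mu> = 1" using \<open>\<mu> \<noteq> 0\<close> basis_nonzero w by simp
    then show ?thesis using \<mu> by simp
  qed
  have "E.subspace {a. e * a = a}"
    by (rule E.subspaceI) (auto simp: distrib_left)
  then have "E.span (b ` carrier G) \<subseteq> {a. e * a = a}"
    using fixes_basis by (intro E.span_minimal) auto
  then have "e * 1 = 1" using span_basis by blast
  then have "e = 1" by simp
  moreover have "e \<in> Esub \<one>"
    unfolding e_def
    by (rule E.subspace_scale[OF component_subspace[OF one_closed] basis_in_component[OF one_closed]])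
  ultimately show ?thesis by simp
qed

lemma basis_mult_inv:
  assumes y: "y \<in> carrier G"
  obtains \<kappa> where "\<kappa> \<noteq> 0" "b y * b (inv y) = sE \<kappa> 1" "b (inv y) * b y = sE \<kappa> 1"
proof -
  obtain k1 where k1: "1 = sE k1 (b y * b (inv y))"
    using component_multiple_basis_mult[of y "inv y" 1] one_in_unit_component y by auto
  obtain k2 where k2: "1 = sE k2 (b (inv y) * b y)"
    using component_multiple_basis_mult[of "inv y" y 1] one_in_unit_component y by auto
  have "k1 \<noteq> 0" "k2 \<noteq> 0" using k1 k2 by auto
  then have "sE (1 / k1) (sE k1 (b y * b (inv y))) = b y * b (inv y)"
    and "sE (1 / k2) (sE k2 (b (inv y) * b y)) = b (inv y) * b y"
    by simp_all
  then have p1: "b y * b (inv y) = sE (1 / k1) 1" and p2: "b (inv y) * b y = sE (1 / k2) 1"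
    using k1 k2 by simp_all
  have "b y * (b (inv y) * b y) = (b y * b (inv y)) * b y" by (simp add: mult.assoc)
  then have "sE (1 / k2) (b y) = sE (1 / k1) (b y)" unfolding p1 p2 by simp
  then have "k1 = k2" using basis_nonzero y by simp
  then show ?thesis using that[of "1 / k1"] p1 p2 \<open>k1 \<noteq> 0\<close> by simp
qed

lemma gamma_x_spec:
  assumes F: "bij_betw F (carrier G) (carrier G)"
    and \<iota>: "bij \<iota>" and \<iota>_grad: "\<forall>w\<in>carrier G. \<iota> ` Esub w = Esub (F w)"
    and x: "x \<in> carrier G" and y: "y \<in> Gamma_x G F x"
  shows "inv_into UNIV \<iota> (b y) * b x = sE (gamma_x sE \<iota> b x y) (b x * b y)"
proof -
  define y' where "y' = inv_into (carrier G) F y"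
  have yc: "y \<in> carrier G" using y by (simp add: Gamma_x_def)
  then have y': "y' \<in> carrier G" "F y' = y"
    using F by (auto simp: y'_def bij_betw_def inv_into_into f_inv_into_f)
  have "b y \<in> \<iota> ` Esub y'"
    using \<iota>_grad y' basis_in_component[OF yc] by simp
  then have "inv_into UNIV \<iota> (b y) \<in> Esub y'"
    using bij_is_inj[OF \<iota>] by auto
  then have "inv_into UNIV \<iota> (b y) * b x \<in> Esub (y' \<otimes> x)"
    using mult_in_component y'(1) x basis_in_component[OF x] by blast
  then have "inv_into UNIV \<iota> (b y) * b x \<in> Esub (x \<otimes> y)"
    using Gamma_x_mult_commute[OF F x y, folded y'_def] by simp
  then obtain g where g: "inv_into UNIV \<iota> (b y) * b x = sE g (b x * b y)"
    using component_multiple_basis_mult[OF x yc] by blast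
  have "gamma_x sE \<iota> b x y = g"
    unfolding gamma_x_def g by (intro the_equality) (use basis_mult_nonzero[OF x yc] in auto)
  then show ?thesis using g by simp
qed

end

lemma is_moduleD:
  assumes "is_module sE sV act"
  shows "vector_space sV"
    and "act (a * d) v = act a (act d v)"
    and "act 1 v = v"
    and "act (a + d) v = act a v + act d v"
    and "act a (u + v) = act a u + act a v"
    and "act (sE c a) v = sV c (act a v)"
    and "act a (sV c v) = sV c (act a v)"
  using assms unfolding is_module_def by blast+

lemma is_module_linear_act:
  "is_module sE sV act \<Longrightarrow> Vector_Spaces.linear sV sV (act a)"
  unfolding Vector_Spaces.linear_iff using is_moduleD(1,5,7) by blast

lemma simple_module_finite_span:
  fixes sV :: "'k::field \<Rightarrow> 'v::ab_group_add \<Rightarrow> 'v"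
  assumes E: "vector_space sE" and "finite A" and A: "module.span sE A = UNIV"
    and V: "is_module sE sV act" and simple: "simple_module sV act"
  obtains S where "finite S" "module.span sV S = UNIV"
proof -
  interpret E: vector_space sE by (rule E)
  interpret V: vector_space sV using V by (rule is_moduleD)
  have act_zero: "act 0 v = 0" for v
    using is_moduleD(4)[OF V, of 0 0 v] by simp
  obtain v0 :: 'v where "v0 \<noteq> 0"
    using simple unfolding simple_module_def by (elim conjE exE)
  have submodules: "\<forall>W. V.subspace W \<and> (\<forall>a. \<forall>v\<in>W. act a v \<in> W) \<longrightarrow> W = {0} \<or> W = UNIV"
    using simple unfolding simple_module_def by (rule conjunct2)
  define orbit where "orbit = range (\<lambda>a. act a v0)"
  have "V.subspace orbit"
  proof (rule V.subspaceI)
    show "0 \<in> orbit" unfolding orbit_def by (metis act_zero rangeI)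
    show "u + w \<in> orbit" if "u \<in> orbit" "w \<in> orbit" for u w
      using that unfolding orbit_def by (auto simp flip: is_moduleD(4)[OF V])
    show "sV c u \<in> orbit" if "u \<in> orbit" for c u
      using that unfolding orbit_def by (auto simp flip: is_moduleD(6)[OF V])
  qed
  moreover have "\<forall>a. \<forall>v\<in>orbit. act a v \<in> orbit"
    unfolding orbit_def by (auto simp flip: is_moduleD(2)[OF V])
  moreover have "v0 \<in> orbit"
    unfolding orbit_def by (metis is_moduleD(3)[OF V] rangeI)
  ultimately have orbit_UNIV: "orbit = UNIV"
    using submodules \<open>v0 \<noteq> 0\<close> by blast
  define S where "S = (\<lambda>a. act a v0) ` A"
  have "E.subspace {a. act a v0 \<in> V.span S}"
    by (rule E.subspaceI)
      (auto simp: act_zero is_moduleD[OF V] V.span_zero V.span_add V.span_scale)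
  then have "E.span A \<subseteq> {a. act a v0 \<in> V.span S}"
    by (intro E.span_minimal) (auto simp: S_def intro: V.span_base)
  then have "orbit \<subseteq> V.span S" using A by (auto simp: orbit_def)
  then show ?thesis
    using that[of S] \<open>finite A\<close> orbit_UNIV by (auto simp: S_def)
qed

lemma iota_act_twisted_commute:
  assumes V: "is_module sE sV act" and lin: "Vector_Spaces.linear sV sV \<iota>V"
    and comm: "\<forall>e v. \<iota>V (act e v) = act (\<iota> e) (\<iota>V v)"
    and "\<iota> e = c" and "e * a = sE g (a * d)"
  shows "act c (\<iota>V (act a v)) = sV g (\<iota>V (act a (act d v)))"
proof -
  have "act c (\<iota>V (act a v)) = \<iota>V (act (e * a) v)"
    using assms(4) comm by (simp add: is_moduleD(2)[OF V])
  also have "\<dots> = sV g (\<iota>V (act a (act d v)))"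
    using assms(5) lin by (simp add: is_moduleD[OF V] Vector_Spaces.linear_iff)
  finally show ?thesis .
qed

theorem mainTheorem15:

  fixes G :: "('a, 'm) monoid_scheme" (structure)
    and F :: "'a \<Rightarrow> 'a"
    and sE :: "'k::field_char_0 \<Rightarrow> 'e::ring_1 \<Rightarrow> 'e"
    and Esub :: "'a \<Rightarrow> 'e set"
    and b :: "'a \<Rightarrow> 'e"
    and \<iota> :: "'e \<Rightarrow> 'e"
    and sV :: "'k \<Rightarrow> 'v::ab_group_add \<Rightarrow> 'v"
    and act :: "'e \<Rightarrow> 'v \<Rightarrow> 'v"
    and \<iota>V :: "'v \<Rightarrow> 'v"
    and x :: 'a
  assumes closed: "alg_closed TYPE('k)"
    and grp: "group G" and fin: "finite (carrier G)"
    and autF: "F \<in> iso G G"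
    and alg: "is_algebra sE"
    and dsum: "direct_sum_decomp G sE Esub"
    and dim1: "\<forall>w\<in>carrier G. vector_space.dim sE (Esub w) = 1"
    and mult: "\<forall>w\<in>carrier G. \<forall>y\<in>carrier G.
                 {a * c | a c. a \<in> Esub w \<and> c \<in> Esub y} = Esub (w \<otimes> y)"
    and bas: "\<forall>w\<in>carrier G. b w \<in> Esub w \<and> b w \<noteq> 0"
    and iota_bij: "bij \<iota>"
    and iota_mult: "\<forall>a c. \<iota> (a * c) = \<iota> a * \<iota> c"
    and iota_one: "\<iota> 1 = 1"
    and iota_add: "\<forall>a c. \<iota> (a + c) = \<iota> a + \<iota> c"
    and iota_scale: "\<forall>k a. \<iota> (sE k a) = sE k (\<iota> a)"
    and iota_grad: "\<forall>w\<in>carrier G. \<iota> ` Esub w = Esub (F w)"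
    and V_mod: "is_module sE sV act"
    and V_simple: "simple_module sV act"
    and iotaV_lin: "Vector_Spaces.linear sV sV \<iota>V"
    and iotaV_bij: "bij \<iota>V"
    and iotaV_comm: "\<forall>e v. \<iota>V (act e v) = act (\<iota> e) (\<iota>V v)"
    and x_in: "x \<in> carrier G"
    and not_eff: "\<not> effective G F sE \<iota> b x"
  shows "lin_trace sV (\<iota>V \<circ> act (b x)) = 0"
proof -
  interpret rank_one_graded_algebra G sE Esub b
    using grp alg dsum dim1 mult bas
    by (simp add: rank_one_graded_algebra_def rank_one_graded_algebra_axioms_def)
  interpret V: vector_space sV using V_mod by (rule is_moduleD)
  obtain S where S: "finite S" "V.span S = UNIV"
    using simple_module_finite_span[OF E.vector_space_axioms _ span_basis V_mod V_simple] fin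
    by blast
  obtain y where y: "y \<in> Gamma_x G F x" and "gamma_x sE \<iota> b x y \<noteq> 1"
    using not_eff unfolding effective_def by blast
  have yc: "y \<in> carrier G" using y by (simp add: Gamma_x_def)
  obtain \<kappa> where \<kappa>: "\<kappa> \<noteq> 0" "b y * b (inv y) = sE \<kappa> 1" "b (inv y) * b y = sE \<kappa> 1"
    using basis_mult_inv[OF yc] by blast
  have F: "bij_betw F (carrier G) (carrier G)" using autF by (simp add: iso_def)
  have "act (b y) (\<iota>V (act (b x) v))
      = sV (gamma_x sE \<iota> b x y) (\<iota>V (act (b x) (act (b y) v)))" for v
    using surj_f_inv_f[OF bij_is_surj[OF iota_bij]]
    by (intro iota_act_twisted_commute[OF V_mod iotaV_lin iotaV_comm _
          gamma_x_spec[OF F iota_bij iota_grad x_in y]]) simp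
  moreover have "act (b y) (act (b (inv y)) v) = sV \<kappa> v"
    and "act (b (inv y)) (act (b y) v) = sV \<kappa> v" for v
    using \<kappa> by (simp_all add: is_moduleD(3,6)[OF V_mod] flip: is_moduleD(2)[OF V_mod])
  ultimately show ?thesis
    using \<open>gamma_x sE \<iota> b x y \<noteq> 1\<close> \<open>\<kappa> \<noteq> 0\<close> is_module_linear_act[OF V_mod]
      Vector_Spaces.linear_compose[OF is_module_linear_act[OF V_mod] iotaV_lin]
    by (intro V.lin_trace_eq_0_if_conjugate_scaled[OF S, where T = "\<iota>V \<circ> act (b x)"
          and B = "act (b y)" and C = "act (b (inv y))" and \<kappa> = \<kappa>]) auto
qed

end
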